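(* Let $n\geq 3$ and suppose the dihedral group $G=\mathrm{D}_{2n}$ of order $2n$ has the $m$-DCI property for a positive integer $m$. If $p$ is a prime divisor of $2n$ such that $p+1\leq m\leq n-1$, then a Sylow $p$-subgroup $G_p$ of $G$ is isomorphic to $\mathbb{Z}_p$ (the cyclic group of order $p$).
   Context: For a group $G$ and a subset $S\subseteq G$ with $1\notin S$, the Cayley digraph $\mathrm{Cay}(G,S)$ has vertex set $G$ and arc set $\{(g,sg)\mid g\in G,\ s\in S\}$. $\mathrm{Cay}(G,S)$ is a CI-digraph if for every $T\subseteq G$ with $1\notin T$ and $\mathrm{Cay}(G,T)\cong\mathrm{Cay}(G,S)$ there is $\alpha\in\mathrm{Aut}(G)$ with $S^\alpha=T$. For a positive integer $m$, $G$ has the $m$-DCI property if every Cayley digraph $\mathrm{Cay}(G,S)$ with $|S|=m$ is a CI-digraph. *)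

theory Defs
  imports "HOL-Computational_Algebra.Primes" "HOL-Algebra.Elementary_Groups"
begin

text \<open>Dihedral group of order 2n: element (i,b) stands for r^i s^b, with
  s r s = r^{-1}. Hence (i,b)(j,c) = (i + (-1)^b j mod n, b xor c).\<close>
definition dihedral_group :: "nat \<Rightarrow> (nat \<times> bool) monoid" where
  "dihedral_group n =
     \<lparr> carrier = {0..<n} \<times> UNIV,
       mult = (\<lambda>(i, b) (j, c). ((i + (if b then (n - j) mod n else j)) mod n, b \<noteq> c)),
       one = (0, False) \<rparr>"

definition cayley_arcs :: "('a, 'b) monoid_scheme \<Rightarrow> 'a set \<Rightarrow> ('a \<times> 'a) set" where
  "cayley_arcs G S = {(g, s \<otimes>\<^bsub>G\<^esub> g) | g s. g \<in> carrier G \<and> s \<in> S}"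

definition cayley_digraph_iso :: "('a, 'b) monoid_scheme \<Rightarrow> 'a set \<Rightarrow> 'a set \<Rightarrow> bool" where
  "cayley_digraph_iso G S T \<longleftrightarrow>
     (\<exists>f. bij_betw f (carrier G) (carrier G) \<and>
          (\<forall>x\<in>carrier G. \<forall>y\<in>carrier G.
             (x, y) \<in> cayley_arcs G S \<longleftrightarrow> (f x, f y) \<in> cayley_arcs G T))"

definition is_CI_digraph :: "('a, 'b) monoid_scheme \<Rightarrow> 'a set \<Rightarrow> bool" where
  "is_CI_digraph G S \<longleftrightarrow>
     (\<forall>T. T \<subseteq> carrier G \<and> \<one>\<^bsub>G\<^esub> \<notin> T \<and> cayley_digraph_iso G S T \<longrightarrow>
          (\<exists>\<alpha>\<in>iso G G. \<alpha> ` S = T))"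

definition has_m_DCI :: "('a, 'b) monoid_scheme \<Rightarrow> nat \<Rightarrow> bool" where
  "has_m_DCI G m \<longleftrightarrow>
     (\<forall>S. S \<subseteq> carrier G \<and> \<one>\<^bsub>G\<^esub> \<notin> S \<and> card S = m \<longrightarrow> is_CI_digraph G S)"

definition sylow_subgroup :: "('a, 'b) monoid_scheme \<Rightarrow> nat \<Rightarrow> 'a set \<Rightarrow> bool" where
  "sylow_subgroup G p P \<longleftrightarrow>
     subgroup P G \<and>
     (\<exists>k. card P = p ^ k \<and> p ^ k dvd order G \<and> \<not> p ^ (Suc k) dvd order G)"

end

theory Submission
  imports Defs "HOL-Algebra.Multiplicative_Group"
begin

definition dih_elem :: "nat \<Rightarrow> int \<Rightarrow> bool \<Rightarrow> nat \<times> bool" where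
  "dih_elem n k b = (nat (k mod int n), b)"

lemma snd_dih_elem [simp]: "snd (dih_elem n k b) = b"
  by (simp add: dih_elem_def)

lemma dih_elem_in_carrier [simp]:
  "0 < n \<Longrightarrow> dih_elem n k b \<in> carrier (dihedral_group n)"
  by (simp add: dih_elem_def dihedral_group_def nat_less_iff)

lemma dihedral_group_elemE:
  assumes "x \<in> carrier (dihedral_group n)"
  obtains k b where "x = dih_elem n k b"
proof
  show "x = dih_elem n (int (fst x)) (snd x)"
    using assms by (cases x) (simp add: dih_elem_def dihedral_group_def)
qed

lemma dih_elem_eq_iff:
  "0 < n \<Longrightarrow> dih_elem n k b = dih_elem n l c \<longleftrightarrow> k mod int n = l mod int n \<and> b = c"
  by (auto simp: dih_elem_def nat_eq_iff2)

lemma one_dihedral_group: "\<one>\<^bsub>dihedral_group n\<^esub> = dih_elem n 0 False"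
  by (simp add: dih_elem_def dihedral_group_def)

lemma dih_elem_mult:
  assumes "0 < n"
  shows "dih_elem n k b \<otimes>\<^bsub>dihedral_group n\<^esub> dih_elem n l c =
    dih_elem n (k + (if b then - l else l)) (b \<noteq> c)"
proof -
  have "int (n - nat (l mod n)) = n - l mod n"
    using assms by (simp add: nat_le_iff less_imp_le)
  then have "int ((nat (k mod n) + (if b then (n - nat (l mod n)) mod n else nat (l mod n))) mod n)
      = (k + (if b then - l else l)) mod n"
    using assms by (auto simp: of_nat_mod mod_simps)
  then show ?thesis
    by (simp add: dih_elem_def dihedral_group_def nat_eq_iff2)
qed

lemma group_dihedral_group:
  assumes "0 < n"
  shows "group (dihedral_group n)"
proof (rule groupI)
  fix x y z
  assume "x \<in> carrier (dihedral_group n)" "y \<in> carrier (dihedral_group n)"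
    "z \<in> carrier (dihedral_group n)"
  then obtain i j k a b c where "x = dih_elem n i a" "y = dih_elem n j b" "z = dih_elem n k c"
    by (metis dihedral_group_elemE)
  then show "x \<otimes>\<^bsub>dihedral_group n\<^esub> y \<otimes>\<^bsub>dihedral_group n\<^esub> z =
      x \<otimes>\<^bsub>dihedral_group n\<^esub> (y \<otimes>\<^bsub>dihedral_group n\<^esub> z)"
    using assms by (simp add: dih_elem_mult dih_elem_eq_iff algebra_simps)
next
  fix x
  assume "x \<in> carrier (dihedral_group n)"
  then obtain k b where x: "x = dih_elem n k b"
    by (metis dihedral_group_elemE)
  show "\<one>\<^bsub>dihedral_group n\<^esub> \<otimes>\<^bsub>dihedral_group n\<^esub> x = x"
    using assms by (simp add: x one_dihedral_group dih_elem_mult)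
  show "\<exists>y\<in>carrier (dihedral_group n). y \<otimes>\<^bsub>dihedral_group n\<^esub> x = \<one>\<^bsub>dihedral_group n\<^esub>"
    using assms
    by (intro bexI[of _ "dih_elem n (if b then k else - k) b"])
       (auto simp: x one_dihedral_group dih_elem_mult dih_elem_eq_iff)
qed (use assms in \<open>auto simp: one_dihedral_group elim!: dihedral_group_elemE simp: dih_elem_mult\<close>)

lemma dih_elem_rotation_pow:
  assumes "0 < n"
  shows "dih_elem n v False [^]\<^bsub>dihedral_group n\<^esub> k = dih_elem n (v * int k) False"
  using assms by (induction k) (simp_all add: one_dihedral_group dih_elem_mult algebra_simps)

lemma dihedral_aut_rotation:
  assumes n: "3 \<le> n" and \<alpha>: "\<alpha> \<in> iso (dihedral_group n) (dihedral_group n)"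
  obtains v where "\<And>k. \<alpha> (dih_elem n (int k) False) = dih_elem n (v * int k) False"
proof -
  let ?D = "dihedral_group n"
  have D: "group ?D" and hom: "\<alpha> \<in> hom ?D ?D" and inj: "inj_on \<alpha> (carrier ?D)"
    using n \<alpha> group_dihedral_group by (auto simp: iso_def bij_betw_def)
  obtain v b where v: "\<alpha> (dih_elem n 1 False) = dih_elem n v b"
    using hom_in_carrier[OF hom, of "dih_elem n 1 False"] n by (auto elim: dihedral_group_elemE)
  have "\<not> b"
  proof
    assume b
    have "\<alpha> (dih_elem n 2 False) = \<alpha> (dih_elem n 1 False) \<otimes>\<^bsub>?D\<^esub> \<alpha> (dih_elem n 1 False)"
      using n hom_mult[OF hom] by (simp flip: hom_mult[OF hom] add: dih_elem_mult)
    also have "\<dots> = \<alpha> (dih_elem n 0 False)"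
      using n \<open>b\<close> v hom_one[OF hom D D] by (simp add: dih_elem_mult one_dihedral_group)
    finally have "dih_elem n 2 False = dih_elem n 0 False"
      using n inj by (auto dest: inj_onD)
    then show False
      using n by (simp add: dih_elem_eq_iff)
  qed
  have "\<alpha> (dih_elem n (int k) False) = dih_elem n (v * int k) False" for k
  proof -
    have "\<alpha> (dih_elem n (int k) False) = \<alpha> (dih_elem n 1 False [^]\<^bsub>?D\<^esub> k)"
      using n by (simp add: dih_elem_rotation_pow)
    also have "\<dots> = dih_elem n v False [^]\<^bsub>?D\<^esub> k"
      using n v \<open>\<not> b\<close> hom_nat_pow[OF hom _ D D] by simp
    finally show ?thesis
      using n by (simp add: dih_elem_rotation_pow)
  qed
  then show ?thesis
    using that by blast
qed

lemma dihedral_aut_reflection: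
  assumes n: "3 \<le> n" and \<alpha>: "\<alpha> \<in> iso (dihedral_group n) (dihedral_group n)"
  shows "snd (\<alpha> (dih_elem n k True))"
proof -
  let ?D = "dihedral_group n"
  have hom: "\<alpha> \<in> hom ?D ?D" and inj: "inj_on \<alpha> (carrier ?D)"
    using \<alpha> by (auto simp: iso_def bij_betw_def)
  obtain w c where w: "\<alpha> (dih_elem n k True) = dih_elem n w c"
    using hom_in_carrier[OF hom, of "dih_elem n k True"] n by (auto elim: dihedral_group_elemE)
  obtain v where v: "\<And>k. \<alpha> (dih_elem n (int k) False) = dih_elem n (v * int k) False"
    using dihedral_aut_rotation[OF n \<alpha>] by blast
  have c
  proof (rule ccontr)
    assume "\<not> c"
    text \<open>Then \<open>\<alpha>\<close> maps \<open>r\<^sup>k s\<close> to a rotation, which commutes with the rotation \<open>\<alpha> r\<close>.\<close>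
    then have "\<alpha> (dih_elem n k True \<otimes>\<^bsub>?D\<^esub> dih_elem n 1 False) =
          \<alpha> (dih_elem n 1 False \<otimes>\<^bsub>?D\<^esub> dih_elem n k True)"
      using n w v[of 1] hom_mult[OF hom, of "dih_elem n k True" "dih_elem n 1 False"]
        hom_mult[OF hom, of "dih_elem n 1 False" "dih_elem n k True"]
      by (simp add: dih_elem_mult add.commute)
    then have "dih_elem n (k - 1) True = dih_elem n (1 + k) True"
      using n inj by (auto simp: dih_elem_mult dest: inj_onD)
    then have "int n dvd 2"
      using n by (simp add: dih_elem_eq_iff mod_eq_dvd_iff)
    then show False
      using n by (auto dest: zdvd_imp_le)
  qed
  then show ?thesis
    unfolding w by simp
qed

lemma cayley_arcs_iff: "(x, y) \<in> cayley_arcs G S \<longleftrightarrow> x \<in> carrier G \<and> y \<in> S #>\<^bsub>G\<^esub> x"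
  by (auto simp: cayley_arcs_def r_coset_def)

lemma r_coset_eq_image: "S #>\<^bsub>G\<^esub> x = (\<lambda>s. s \<otimes>\<^bsub>G\<^esub> x) ` S"
  by (auto simp: r_coset_def)

lemma r_coset_Un: "(A \<union> B) #>\<^bsub>G\<^esub> x = (A #>\<^bsub>G\<^esub> x) \<union> (B #>\<^bsub>G\<^esub> x)"
  by (auto simp: r_coset_def)

lemma cayley_digraph_isoI:
  assumes G: "monoid G" and F: "bij_betw F (carrier G) (carrier G)" and S: "S \<subseteq> carrier G"
    and nbhd: "\<And>x. x \<in> carrier G \<Longrightarrow> F ` (S #>\<^bsub>G\<^esub> x) = T #>\<^bsub>G\<^esub> F x"
  shows "cayley_digraph_iso G S T"
  unfolding cayley_digraph_iso_def
proof (intro exI conjI ballI)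
  fix x y
  assume x: "x \<in> carrier G" and y: "y \<in> carrier G"
  have "S #>\<^bsub>G\<^esub> x \<subseteq> carrier G"
    using S x monoid.m_closed[OF G] by (auto simp: r_coset_def)
  then have "y \<in> S #>\<^bsub>G\<^esub> x \<longleftrightarrow> F y \<in> F ` (S #>\<^bsub>G\<^esub> x)"
    using F y by (metis bij_betw_imp_inj_on inj_on_image_mem_iff)
  then show "(x, y) \<in> cayley_arcs G S \<longleftrightarrow> (F x, F y) \<in> cayley_arcs G T"
    using x F nbhd by (auto simp: cayley_arcs_iff bij_betw_apply)
qed (rule F)

lemma not_has_m_DCI:
  assumes "S \<subseteq> carrier G" "\<one>\<^bsub>G\<^esub> \<notin> S" "T \<subseteq> carrier G" "\<one>\<^bsub>G\<^esub> \<notin> T"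
    and "cayley_digraph_iso G S T" and "\<And>\<alpha>. \<alpha> \<in> iso G G \<Longrightarrow> \<alpha> ` S \<noteq> T"
  shows "\<not> has_m_DCI G (card S)"
  using assms unfolding has_m_DCI_def is_CI_digraph_def by blast

lemma involution_invariant_subset_even:
  assumes X: "finite X" and \<sigma>: "\<And>x. x \<in> X \<Longrightarrow> \<sigma> x \<in> X \<and> \<sigma> (\<sigma> x) = x"
    and t: "2 * t \<le> card X"
  shows "\<exists>Y\<subseteq>X. \<sigma> ` Y \<subseteq> Y \<and> card Y = 2 * t"
  using t
proof (induction t)
  case 0
  show ?case
    by (intro exI[of _ "{}"]) simp
next
  case (Suc t)
  then obtain Y where Y: "Y \<subseteq> X" "\<sigma> ` Y \<subseteq> Y" "card Y = 2 * t"
    by auto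
  have "finite Y"
    using X Y(1) finite_subset by blast
  have "\<not> card (X - Y) \<le> Suc 0"
    using Suc.prems Y by (simp add: card_Diff_subset \<open>finite Y\<close>)
  then obtain a b where ab: "a \<in> X - Y" "b \<in> X - Y" "a \<noteq> b"
    using card_le_Suc0_iff_eq[of "X - Y"] X by blast
  have \<sigma>_out: "\<sigma> z \<in> X - Y" if z: "z \<in> X - Y" for z
  proof -
    have "\<sigma> z \<notin> Y"
    proof
      assume "\<sigma> z \<in> Y"
      then have "\<sigma> (\<sigma> z) \<in> Y"
        using Y(2) by blast
      then show False
        using z \<sigma>[of z] by simp
    qed
    then show ?thesis
      using z \<sigma>[of z] by simp
  qed
  show ?case
  proof (cases "\<exists>z\<in>X - Y. \<sigma> z \<noteq> z")
    case True
    then obtain z where z: "z \<in> X - Y" "\<sigma> z \<noteq> z" by blast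
    have "\<sigma> ` insert z (insert (\<sigma> z) Y) \<subseteq> insert z (insert (\<sigma> z) Y)"
      using Y(2) z(1) \<sigma>[of z] by auto
    moreover have "card (insert z (insert (\<sigma> z) Y)) = 2 * Suc t"
      using z \<sigma>_out[OF z(1)] Y(3) \<open>finite Y\<close> by simp
    moreover have "insert z (insert (\<sigma> z) Y) \<subseteq> X"
      using z(1) \<sigma>_out[OF z(1)] Y(1) by simp
    ultimately show ?thesis
      by blast
  next
    case False
    then have "\<sigma> ` insert a (insert b Y) \<subseteq> insert a (insert b Y)"
      using ab Y(2) by auto
    moreover have "card (insert a (insert b Y)) = 2 * Suc t"
      using ab Y(3) \<open>finite Y\<close> by simp
    moreover have "insert a (insert b Y) \<subseteq> X"
      using ab Y(1) by simp
    ultimately show ?thesis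
      by blast
  qed
qed
lemma involution_invariant_subset:
  assumes X: "finite X" and \<sigma>: "\<And>x. x \<in> X \<Longrightarrow> \<sigma> x \<in> X \<and> \<sigma> (\<sigma> x) = x"
    and x\<^sub>0: "x\<^sub>0 \<in> X" "\<sigma> x\<^sub>0 = x\<^sub>0" and k: "k \<le> card X"
  shows "\<exists>Y\<subseteq>X. \<sigma> ` Y \<subseteq> Y \<and> card Y = k"
proof (cases "even k")
  case True
  then obtain t where "k = 2 * t" by blast
  then show ?thesis
    using involution_invariant_subset_even[OF X \<sigma>, of t] k by simp
next
  case False
  define t where "t = k div 2"
  have t: "k = Suc (2 * t)"
    using False by (simp add: t_def)
  have "\<sigma> x \<in> X - {x\<^sub>0} \<and> \<sigma> (\<sigma> x) = x" if x: "x \<in> X - {x\<^sub>0}" for x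
    using \<sigma>[of x] x x\<^sub>0(2) by auto
  moreover have "2 * t \<le> card (X - {x\<^sub>0})"
    using k t x\<^sub>0(1) X by simp
  ultimately obtain Y where Y: "Y \<subseteq> X - {x\<^sub>0}" "\<sigma> ` Y \<subseteq> Y" "card Y = 2 * t"
    using involution_invariant_subset_even[of "X - {x\<^sub>0}" \<sigma> t] X by auto
  have "finite Y"
    using X Y(1) finite_subset by blast
  then have "card (insert x\<^sub>0 Y) = k"
    using Y(1,3) t by (simp add: subset_Diff_insert)
  moreover have "insert x\<^sub>0 Y \<subseteq> X" "\<sigma> ` insert x\<^sub>0 Y \<subseteq> insert x\<^sub>0 Y"
    using Y(1,2) x\<^sub>0 by auto
  ultimately show ?thesis
    by blast
qed
lemma fst_dih_elem: "0 < n \<Longrightarrow> int (fst (dih_elem n k b)) = k mod int n"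
  by (simp add: dih_elem_def)

lemma even_fst_dih_elem: "even n \<Longrightarrow> 0 < n \<Longrightarrow> even (fst (dih_elem n k b)) \<longleftrightarrow> even k"
  by (metis fst_dih_elem even_of_nat even_of_nat_iff mod_mod_cancel dvd_mod_iff)

definition sigma_even :: "nat \<Rightarrow> nat \<times> bool \<Rightarrow> nat \<times> bool" where
  "sigma_even n = (\<lambda>(i, b). dih_elem n (if b then 2 - int i else - int i) b)"

definition tau_even :: "nat \<Rightarrow> nat \<times> bool \<Rightarrow> nat \<times> bool" where
  "tau_even n = (\<lambda>(i, b). dih_elem n (if b then 1 - int i else int i) False)"

definition cayley_map_even :: "nat \<Rightarrow> nat \<times> bool \<Rightarrow> nat \<times> bool" where
  "cayley_map_even n = (\<lambda>(i, b). dih_elem n (if b = even i then 1 - int i else int i) (odd i))"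

lemma sigma_even_dih_elem:
  "0 < n \<Longrightarrow> sigma_even n (dih_elem n k b) = dih_elem n (if b then 2 - k else - k) b"
  by (simp add: sigma_even_def dih_elem_def[of n k] dih_elem_eq_iff mod_simps)

lemma tau_even_dih_elem:
  "0 < n \<Longrightarrow> tau_even n (dih_elem n k b) = dih_elem n (if b then 1 - k else k) False"
  by (simp add: tau_even_def dih_elem_def[of n k] dih_elem_eq_iff mod_simps)

lemma cayley_map_even_dih_elem:
  assumes "even n" "0 < n"
  shows "cayley_map_even n (dih_elem n k b) = dih_elem n (if b = even k then 1 - k else k) (odd k)"
proof -
  have "even (nat (k mod int n)) \<longleftrightarrow> even k"
    using even_fst_dih_elem[OF assms] by (simp add: dih_elem_def)
  then show ?thesis
    using assms by (simp add: cayley_map_even_def dih_elem_def[of n k] dih_elem_eq_iff mod_simps)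
qed

lemma cayley_map_even_mult:
  assumes "even n" "0 < n" "even c"
  shows "cayley_map_even n (dih_elem n c a \<otimes>\<^bsub>dihedral_group n\<^esub> dih_elem n k b) =
    tau_even n (if b = even k then sigma_even n (dih_elem n c a) else dih_elem n c a)
      \<otimes>\<^bsub>dihedral_group n\<^esub> cayley_map_even n (dih_elem n k b)"
  using assms
  by (cases a; cases b; cases "even k")
     (simp_all add: dih_elem_mult cayley_map_even_dih_elem sigma_even_dih_elem
        tau_even_dih_elem dih_elem_eq_iff algebra_simps)

lemma sigma_even_involution:
  assumes "0 < n" "x \<in> carrier (dihedral_group n)"
  shows "sigma_even n (sigma_even n x) = x"
  using assms by (elim dihedral_group_elemE) (simp add: sigma_even_dih_elem dih_elem_eq_iff)

lemma cayley_map_even_involution: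
  assumes "even n" "0 < n" "x \<in> carrier (dihedral_group n)"
  shows "cayley_map_even n (cayley_map_even n x) = x"
proof -
  obtain k b where x: "x = dih_elem n k b"
    using assms(3) by (rule dihedral_group_elemE)
  show ?thesis
  proof (cases "b = even k")
    case True
    then have "cayley_map_even n x = dih_elem n (1 - k) (odd k)"
      using assms by (simp add: x cayley_map_even_dih_elem)
    then show ?thesis
      using True assms by (simp add: x cayley_map_even_dih_elem dih_elem_eq_iff)
  next
    case False
    then have "cayley_map_even n x = dih_elem n k (odd k)"
      using assms by (simp add: x cayley_map_even_dih_elem)
    then show ?thesis
      using False assms by (simp add: x cayley_map_even_dih_elem dih_elem_eq_iff)
  qed
qed

lemma card_even_part_dihedral_group:
  assumes "even n"
  shows "card {x \<in> carrier (dihedral_group n). even (fst x)} = n"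
proof -
  have "{x \<in> carrier (dihedral_group n). even (fst x)} = (\<lambda>(j, b). (2 * j, b)) ` ({..<n div 2} \<times> UNIV)"
    using assms by (auto simp: image_iff dihedral_group_def elim!: evenE)
  moreover have "inj_on (\<lambda>(j, b). (2 * j, b)) ({..<n div 2} \<times> (UNIV :: bool set))"
    by (auto simp: inj_on_def)
  ultimately show ?thesis
    using assms by (simp add: card_image card_cartesian_product)
qed

lemma even_case_connection_set:
  assumes n: "even n" "4 \<le> n" and m: "3 \<le> m" "m \<le> n - 1"
  obtains Y where "Y \<subseteq> carrier (dihedral_group n)" "\<one>\<^bsub>dihedral_group n\<^esub> \<notin> Y"
    "\<And>y. y \<in> Y \<Longrightarrow> even (fst y)" "sigma_even n ` Y \<subseteq> Y"
    "dih_elem n 0 True \<in> Y" "card Y = m"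
proof -
  let ?D = "dihedral_group n" and ?\<sigma> = "sigma_even n"
  have n0: "0 < n"
    using n by simp
  define X where "X = {x \<in> carrier ?D. even (fst x)} - {\<one>\<^bsub>?D\<^esub>}"
  define Q where "Q = {dih_elem n 0 True, dih_elem n 2 True}"
  have X_iff: "dih_elem n k b \<in> X \<longleftrightarrow> even k \<and> \<not> (\<not> b \<and> k mod int n = 0)" for k b
    using n n0 by (auto simp: X_def even_fst_dih_elem one_dihedral_group dih_elem_eq_iff)
  have \<sigma>X: "?\<sigma> x \<in> X \<and> ?\<sigma> (?\<sigma> x) = x" if "x \<in> X" for x
  proof -
    have "x \<in> carrier ?D"
      using that by (simp add: X_def)
    then obtain k b where x: "x = dih_elem n k b"
      by (rule dihedral_group_elemE)
    show ?thesis
      using that n0 by (auto simp: x X_iff sigma_even_dih_elem dih_elem_eq_iff mod_minus_eq)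
  qed
  have \<sigma>Q: "?\<sigma> ` Q = Q"
    using n0 by (auto simp: Q_def sigma_even_dih_elem)
  have QX: "Q \<subseteq> X" and card_Q: "card Q = 2"
    using n by (auto simp: Q_def X_iff dih_elem_eq_iff)
  have finite_X: "finite X"
    by (simp add: X_def dihedral_group_def)
  have "\<one>\<^bsub>?D\<^esub> \<in> {x \<in> carrier ?D. even (fst x)}"
    using n0 by (simp add: dihedral_group_def)
  then have card_X: "card X = n - 1"
    unfolding X_def by (simp add: card_Diff_singleton card_even_part_dihedral_group[OF n(1)])
  have \<sigma>X': "?\<sigma> x \<in> X - Q \<and> ?\<sigma> (?\<sigma> x) = x" if "x \<in> X - Q" for x
    using that \<sigma>X \<sigma>Q by (metis Diff_iff image_eqI)
  text \<open>A fixed point of \<open>\<sigma>\<close> outside \<open>Q\<close> allows invariant subsets of odd size.\<close>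
  obtain x\<^sub>0 where x\<^sub>0: "x\<^sub>0 \<in> X - Q" "?\<sigma> x\<^sub>0 = x\<^sub>0"
  proof -
    define h where "h = int (n div 2)"
    have h: "int n = 2 * h" "2 \<le> h"
      using n by (auto simp: h_def)
    show ?thesis
    proof (cases "even h")
      case True
      have "(- h) mod int n = h mod int n"
        unfolding mod_eq_dvd_iff using h by simp
      then show ?thesis
        using that[of "dih_elem n h False"] True h n0
        by (auto simp: X_iff Q_def sigma_even_dih_elem dih_elem_eq_iff)
    next
      case False
      have "(2 - (h + 1)) mod int n = (h + 1) mod int n"
        unfolding mod_eq_dvd_iff using h by simp
      moreover have "(h + 1) mod int n = h + 1"
        using h False by (auto intro!: mod_pos_pos_trivial)
      ultimately show ?thesis
        using that[of "dih_elem n (h + 1) True"] False h n0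
        by (auto simp: X_iff Q_def sigma_even_dih_elem dih_elem_eq_iff)
    qed
  qed
  have "m - 2 \<le> card (X - Q)"
    using m card_X card_Q QX finite_X by (simp add: card_Diff_subset finite_subset)
  with finite_X have "\<exists>Y'\<subseteq>X - Q. ?\<sigma> ` Y' \<subseteq> Y' \<and> card Y' = m - 2"
    by (intro involution_invariant_subset[OF _ \<sigma>X' x\<^sub>0]) simp_all
  then obtain Y' where Y': "Y' \<subseteq> X - Q" "?\<sigma> ` Y' \<subseteq> Y'" "card Y' = m - 2"
    by blast
  show ?thesis
  proof (rule that[of "Y' \<union> Q"])
    show "Y' \<union> Q \<subseteq> carrier ?D" "\<one>\<^bsub>?D\<^esub> \<notin> Y' \<union> Q" "\<And>y. y \<in> Y' \<union> Q \<Longrightarrow> even (fst y)"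
      using Y'(1) QX by (auto simp: X_def)
    show "?\<sigma> ` (Y' \<union> Q) \<subseteq> Y' \<union> Q"
      using Y'(2) \<sigma>Q by auto
    show "dih_elem n 0 True \<in> Y' \<union> Q"
      by (simp add: Q_def)
    have "finite Y'"
      using Y'(1) finite_X by (auto intro: finite_subset)
    then show "card (Y' \<union> Q) = m"
      using Y' card_Q m by (subst card_Un_disjoint) (auto simp: Q_def)
  qed
qed

lemma even_dihedral_not_m_DCI:
  assumes n: "even n" "4 \<le> n" and m: "3 \<le> m" "m \<le> n - 1"
  shows "\<not> has_m_DCI (dihedral_group n) m"
proof -
  let ?D = "dihedral_group n" and ?\<sigma> = "sigma_even n" and ?F = "cayley_map_even n"
  have n0: "0 < n"
    using n by simp
  obtain Y where Y: "Y \<subseteq> carrier ?D" "\<one>\<^bsub>?D\<^esub> \<notin> Y" "\<And>y. y \<in> Y \<Longrightarrow> even (fst y)"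
    "?\<sigma> ` Y \<subseteq> Y" "dih_elem n 0 True \<in> Y" "card Y = m"
    using even_case_connection_set[OF n m] by blast
  define T where "T = tau_even n ` Y"
  have Y_even: "\<exists>c a. y = dih_elem n c a \<and> even c" if "y \<in> Y" for y
  proof -
    have "y = dih_elem n (int (fst y)) (snd y)"
      using that Y(1) by (auto simp: dih_elem_def dihedral_group_def)
    moreover have "even (int (fst y))"
      using that Y(3) by simp
    ultimately show ?thesis
      by blast
  qed
  have \<sigma>Y: "?\<sigma> ` Y = Y"
  proof
    show "Y \<subseteq> ?\<sigma> ` Y"
    proof
      fix y
      assume "y \<in> Y"
      then have "y = ?\<sigma> (?\<sigma> y)" "?\<sigma> y \<in> Y"
        using Y(1,4) sigma_even_involution[OF n0, of y] by auto
      then show "y \<in> ?\<sigma> ` Y"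
        by blast
    qed
  qed (rule Y(4))
  have T: "T \<subseteq> carrier ?D" "\<one>\<^bsub>?D\<^esub> \<notin> T"
  proof -
    show "T \<subseteq> carrier ?D"
      using n0 by (auto simp: T_def tau_even_def)
    have "tau_even n y \<noteq> \<one>\<^bsub>?D\<^esub>" if "y \<in> Y" for y
    proof -
      obtain c a where y: "y = dih_elem n c a" "even c"
        using Y_even[OF \<open>y \<in> Y\<close>] by blast
      show ?thesis
      proof (cases a)
        case True
        have "odd (1 - c)" "even (int n)"
          using y(2) n(1) by simp_all
        then have "\<not> int n dvd 1 - c"
          using dvd_trans by blast
        then show ?thesis
          using True n0 by (simp add: y tau_even_dih_elem one_dihedral_group dih_elem_eq_iff dvd_eq_mod_eq_0)
      next
        case False
        then show ?thesis
          using \<open>y \<in> Y\<close> Y(2) n0 by (auto simp: y tau_even_dih_elem)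
      qed
    qed
    then show "\<one>\<^bsub>?D\<^esub> \<notin> T"
      unfolding T_def by (metis imageE)
  qed
  have F: "bij_betw ?F (carrier ?D) (carrier ?D)"
    using n n0 cayley_map_even_involution
    by (intro bij_betw_byWitness[where f' = ?F]) (auto simp: cayley_map_even_def)
  have "?F ` (Y #>\<^bsub>?D\<^esub> x) = T #>\<^bsub>?D\<^esub> ?F x" if "x \<in> carrier ?D" for x
  proof -
    obtain k b where x: "x = dih_elem n k b"
      using \<open>x \<in> carrier ?D\<close> by (rule dihedral_group_elemE)
    define \<sigma>' where "\<sigma>' = (if b = even k then ?\<sigma> else id)"
    have "\<sigma>' ` Y = Y"
      using \<sigma>Y by (simp add: \<sigma>'_def)
    have "?F ` (Y #>\<^bsub>?D\<^esub> x) = (\<lambda>y. ?F (y \<otimes>\<^bsub>?D\<^esub> x)) ` Y"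
      by (simp add: r_coset_eq_image image_image)
    also have "\<dots> = (\<lambda>y. tau_even n (\<sigma>' y) \<otimes>\<^bsub>?D\<^esub> ?F x) ` Y"
    proof (rule image_cong[OF refl])
      fix y
      assume "y \<in> Y"
      then obtain c a where "y = dih_elem n c a" "even c"
        using Y_even by blast
      then show "?F (y \<otimes>\<^bsub>?D\<^esub> x) = tau_even n (\<sigma>' y) \<otimes>\<^bsub>?D\<^esub> ?F x"
        using n n0 by (simp add: x \<sigma>'_def cayley_map_even_mult)
    qed
    also have "\<dots> = (\<lambda>t. t \<otimes>\<^bsub>?D\<^esub> ?F x) ` (tau_even n ` \<sigma>' ` Y)"
      by (simp add: image_image)
    finally show ?thesis
      by (simp add: \<open>\<sigma>' ` Y = Y\<close> T_def r_coset_eq_image)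
  qed
  then have "cayley_digraph_iso ?D Y T"
    using group.is_monoid[OF group_dihedral_group[OF n0]] F Y(1) by (intro cayley_digraph_isoI)
  moreover have "\<alpha> ` Y \<noteq> T" if "\<alpha> \<in> iso ?D ?D" for \<alpha>
  proof -
    have "snd (\<alpha> (dih_elem n 0 True))"
      using dihedral_aut_reflection n that by simp
    moreover have "\<not> snd t" if "t \<in> T" for t
      using that by (auto simp: T_def tau_even_def)
    ultimately show ?thesis
      using Y(5) by blast
  qed
  ultimately have "\<not> has_m_DCI ?D (card Y)"
    by (rule not_has_m_DCI[OF Y(1,2) T])
  then show ?thesis
    using Y(6) by simp
qed

definition mirror_mod :: "int \<Rightarrow> int \<Rightarrow> int" where
  "mirror_mod d k = 2 * (k mod d) - k"

lemma mirror_mod_mod [simp]: "mirror_mod d k mod d = k mod d"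
proof -
  have "mirror_mod d k mod d = (2 * k - k) mod d"
    unfolding mirror_mod_def by (metis mod_diff_left_eq mod_mult_right_eq)
  then show ?thesis
    by simp
qed

lemma mirror_mod_mirror_mod [simp]: "mirror_mod d (mirror_mod d k) = k"
  using mirror_mod_mod[of d k] by (simp add: mirror_mod_def[of d "mirror_mod d k"]) (simp add: mirror_mod_def)

lemma mirror_mod_add_mult: "mirror_mod d (k + d * j) = mirror_mod d k - d * j"
  by (simp add: mirror_mod_def)

lemma mirror_mod_cong:
  assumes "d dvd n" "k mod n = l mod n"
  shows "mirror_mod d k mod n = mirror_mod d l mod n"
proof -
  obtain e where e: "n = d * e"
    using assms(1) by blast
  obtain t where t: "l = k + n * t"
    using assms(2) by (metis mod_eq_dvd_iff dvdE diff_add_cancel add.commute)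
  have "mirror_mod d l = mirror_mod d k - n * t"
    using mirror_mod_add_mult[of d k "e * t"] by (simp add: e t mult.assoc)
  then show ?thesis
    unfolding mod_eq_dvd_iff by simp
qed

definition cayley_map_odd :: "nat \<Rightarrow> nat \<Rightarrow> nat \<times> bool \<Rightarrow> nat \<times> bool" where
  "cayley_map_odd n d =
     (\<lambda>(i, b). dih_elem n (if b then - mirror_mod d (- int i) else mirror_mod d (int i)) b)"

lemma cayley_map_odd_dih_elem:
  assumes "0 < n" "d dvd n"
  shows "cayley_map_odd n d (dih_elem n k b) =
    dih_elem n (if b then - mirror_mod d (- k) else mirror_mod d k) b"
proof -
  have "mirror_mod d (k mod n) mod n = mirror_mod d k mod n"
    "(- mirror_mod d (- (k mod n))) mod n = (- mirror_mod d (- k)) mod n"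
    using assms(2) by (auto intro!: mirror_mod_cong mod_minus_cong simp: mod_minus_eq)
  then show ?thesis
    using assms(1) by (simp add: cayley_map_odd_def dih_elem_def[of n k] dih_elem_eq_iff mod_minus_eq)
qed

lemma cayley_map_odd_involution:
  assumes "0 < n" "d dvd n" "x \<in> carrier (dihedral_group n)"
  shows "cayley_map_odd n d (cayley_map_odd n d x) = x"
  using assms by (elim dihedral_group_elemE) (simp add: cayley_map_odd_dih_elem)

lemma cayley_map_odd_residue:
  assumes "0 < n" "d dvd n"
  obtains k' where "cayley_map_odd n d (dih_elem n k b) = dih_elem n k' b" "k' mod d = k mod d"
proof
  show "cayley_map_odd n d (dih_elem n k b) = dih_elem n (if b then - mirror_mod d (- k) else mirror_mod d k) b"
    using assms by (rule cayley_map_odd_dih_elem)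
  show "(if b then - mirror_mod d (- k) else mirror_mod d k) mod d = k mod d"
    using mod_minus_cong[OF mirror_mod_mod[of d "- k"]] by simp
qed

lemma mirror_mod_shift: "mirror_mod d (d * j + k) = mirror_mod d k - d * j"
  by (simp add: mirror_mod_def)

lemma cayley_map_odd_mult_multiple:
  assumes n: "0 < n" "d dvd n" and y: "y \<in> carrier (dihedral_group n)"
  shows "cayley_map_odd n d (dih_elem n (d * j) a \<otimes>\<^bsub>dihedral_group n\<^esub> y) =
    dih_elem n (- (d * j)) a \<otimes>\<^bsub>dihedral_group n\<^esub> cayley_map_odd n d y"
proof -
  obtain k b where y: "y = dih_elem n k b"
    using y by (rule dihedral_group_elemE)
  have "(if a \<noteq> b then - mirror_mod d (- (d * j + (if a then - k else k)))
      else mirror_mod d (d * j + (if a then - k else k))) =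
    - (d * j) + (if a then - (if b then - mirror_mod d (- k) else mirror_mod d k)
      else (if b then - mirror_mod d (- k) else mirror_mod d k))"
    using mirror_mod_shift[of d j k] mirror_mod_shift[of d "- j" "- k"]
      mirror_mod_shift[of d "- j" k] mirror_mod_shift[of d j "- k"]
    by (cases a; cases b) (simp_all add: algebra_simps)
  then show ?thesis
    by (simp only: y dih_elem_mult[OF n(1)] cayley_map_odd_dih_elem[OF n])
qed

definition residue_saturated :: "nat \<Rightarrow> nat \<Rightarrow> (nat \<times> bool) set \<Rightarrow> bool" where
  "residue_saturated n d A \<longleftrightarrow>
     (\<forall>k l b. dih_elem n k b \<in> A \<longrightarrow> l mod int d = k mod int d \<longrightarrow> dih_elem n l b \<in> A)"

lemma residue_saturated_Un:
  "residue_saturated n d A \<Longrightarrow> residue_saturated n d B \<Longrightarrow> residue_saturated n d (A \<union> B)"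
  unfolding residue_saturated_def by blast

lemma residue_saturated_r_coset:
  assumes n: "0 < n" "d dvd n" and A: "residue_saturated n d A" "A \<subseteq> carrier (dihedral_group n)"
    and x: "x \<in> carrier (dihedral_group n)"
  shows "residue_saturated n d (A #>\<^bsub>dihedral_group n\<^esub> x)"
  unfolding residue_saturated_def
proof (intro allI impI)
  fix k l b
  assume "dih_elem n k b \<in> A #>\<^bsub>dihedral_group n\<^esub> x" and l: "l mod int d = k mod int d"
  then obtain y where y: "y \<in> A" "dih_elem n k b = y \<otimes>\<^bsub>dihedral_group n\<^esub> x"
    by (auto simp: r_coset_eq_image)
  obtain j a where j: "y = dih_elem n j a"
    using y(1) A(2) by (blast elim: dihedral_group_elemE)
  obtain i c where i: "x = dih_elem n i c"
    using x by (rule dihedral_group_elemE)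
  let ?e = "if a then - i else i"
  have "k mod int n = (j + ?e) mod int n" "b = (a \<noteq> c)"
    using y(2) n(1) by (simp_all add: i j dih_elem_mult dih_elem_eq_iff)
  then have "(l - ?e) mod int d = j mod int d"
    using l n(2) by (metis mod_mod_cancel of_nat_dvd_iff mod_diff_left_eq add_diff_cancel_right')
  then have "dih_elem n (l - ?e) a \<in> A"
    using A(1) y(1) j unfolding residue_saturated_def by blast
  moreover have "dih_elem n l b = dih_elem n (l - ?e) a \<otimes>\<^bsub>dihedral_group n\<^esub> x"
    using n(1) \<open>b = (a \<noteq> c)\<close> by (simp add: i dih_elem_mult)
  ultimately show "dih_elem n l b \<in> A #>\<^bsub>dihedral_group n\<^esub> x"
    by (auto simp: r_coset_eq_image)
qed

lemma residue_saturated_r_coset_cong: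
  assumes n: "0 < n" and A: "residue_saturated n d A" "A \<subseteq> carrier (dihedral_group n)"
    and k: "k' mod int d = k mod int d"
  shows "A #>\<^bsub>dihedral_group n\<^esub> dih_elem n k' b = A #>\<^bsub>dihedral_group n\<^esub> dih_elem n k b"
proof -
  have "A #>\<^bsub>dihedral_group n\<^esub> dih_elem n k' b \<subseteq> A #>\<^bsub>dihedral_group n\<^esub> dih_elem n k b"
    if "k' mod int d = k mod int d" for k k'
  proof
    fix z
    assume "z \<in> A #>\<^bsub>dihedral_group n\<^esub> dih_elem n k' b"
    then obtain j a where j: "dih_elem n j a \<in> A" "z = dih_elem n j a \<otimes>\<^bsub>dihedral_group n\<^esub> dih_elem n k' b"
      using A(2) by (auto simp: r_coset_eq_image elim!: dihedral_group_elemE)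
    let ?j = "j + (if a then k - k' else k' - k)"
    have "?j mod int d = j mod int d"
      using that by (auto simp: mod_eq_dvd_iff dvd_diff_commute)
    then have "dih_elem n ?j a \<in> A"
      using A(1) j(1) unfolding residue_saturated_def by blast
    moreover have "z = dih_elem n ?j a \<otimes>\<^bsub>dihedral_group n\<^esub> dih_elem n k b"
      using n by (simp add: j(2) dih_elem_mult dih_elem_eq_iff algebra_simps)
    ultimately show "z \<in> A #>\<^bsub>dihedral_group n\<^esub> dih_elem n k b"
      by (auto simp: r_coset_eq_image)
  qed
  then show ?thesis
    using k by (metis subset_antisym)
qed

lemma cayley_map_odd_image_saturated:
  assumes n: "0 < n" "d dvd n" and A: "residue_saturated n d A" "A \<subseteq> carrier (dihedral_group n)"
  shows "cayley_map_odd n d ` A = A"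
proof -
  have into: "cayley_map_odd n d x \<in> A" if x_A: "x \<in> A" for x
  proof -
    obtain k b where x: "x = dih_elem n k b"
      using x_A A(2) by (blast elim: dihedral_group_elemE)
    obtain k' where "cayley_map_odd n d x = dih_elem n k' b" "k' mod int d = k mod int d"
      using cayley_map_odd_residue[OF n] x by metis
    then show ?thesis
      using A(1) x_A x unfolding residue_saturated_def by metis
  qed
  moreover have "x \<in> cayley_map_odd n d ` A" if "x \<in> A" for x
    using that into[OF that] cayley_map_odd_involution[OF n, of x] A(2) by (metis image_eqI subsetD)
  ultimately show ?thesis
    by blast
qed

lemma cayley_map_odd_r_coset_saturated:
  assumes n: "0 < n" "d dvd n" and A: "residue_saturated n d A" "A \<subseteq> carrier (dihedral_group n)"
    and x: "x \<in> carrier (dihedral_group n)"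
  shows "cayley_map_odd n d ` (A #>\<^bsub>dihedral_group n\<^esub> x) = A #>\<^bsub>dihedral_group n\<^esub> cayley_map_odd n d x"
proof -
  obtain k b where x': "x = dih_elem n k b"
    using x by (rule dihedral_group_elemE)
  obtain k' where F: "cayley_map_odd n d (dih_elem n k b) = dih_elem n k' b" "k' mod int d = k mod int d"
    using cayley_map_odd_residue[OF n] by metis
  have "A #>\<^bsub>dihedral_group n\<^esub> x \<subseteq> carrier (dihedral_group n)"
    unfolding r_coset_eq_image
    using A(2) x monoid.m_closed[OF group.is_monoid[OF group_dihedral_group[OF n(1)]]] by blast
  then have "cayley_map_odd n d ` (A #>\<^bsub>dihedral_group n\<^esub> x) = A #>\<^bsub>dihedral_group n\<^esub> x"
    using cayley_map_odd_image_saturated[OF n] residue_saturated_r_coset[OF n A x] by blast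
  also have "\<dots> = A #>\<^bsub>dihedral_group n\<^esub> cayley_map_odd n d x"
    unfolding F(1) x' by (rule residue_saturated_r_coset_cong[OF n(1) A F(2), symmetric])
  finally show ?thesis .
qed

lemma cayley_map_odd_r_coset_multiples:
  assumes n: "0 < n" "d dvd n" and x: "x \<in> carrier (dihedral_group n)"
  shows "cayley_map_odd n d ` (((\<lambda>(j, a). dih_elem n (d * j) a) ` J) #>\<^bsub>dihedral_group n\<^esub> x) =
    ((\<lambda>(j, a). dih_elem n (- (d * j)) a) ` J) #>\<^bsub>dihedral_group n\<^esub> cayley_map_odd n d x"
  using cayley_map_odd_mult_multiple[OF n x]
  by (simp add: r_coset_eq_image image_image case_prod_unfold)

definition residue_set :: "nat \<Rightarrow> nat \<Rightarrow> int set \<Rightarrow> bool \<Rightarrow> (nat \<times> bool) set" where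
  "residue_set n d R b = {dih_elem n k b | k. k mod int d \<in> R}"

lemma residue_set_subset_carrier: "0 < n \<Longrightarrow> residue_set n d R b \<subseteq> carrier (dihedral_group n)"
  by (auto simp: residue_set_def)

lemma dih_elem_in_residue_set_iff:
  assumes "0 < n" "d dvd n"
  shows "dih_elem n k c \<in> residue_set n d R b \<longleftrightarrow> c = b \<and> k mod int d \<in> R"
proof
  assume "dih_elem n k c \<in> residue_set n d R b"
  then obtain l where l: "dih_elem n k c = dih_elem n l b" "l mod int d \<in> R"
    by (auto simp: residue_set_def)
  then have "k mod int n = l mod int n" "c = b"
    using assms(1) by (simp_all add: dih_elem_eq_iff)
  moreover have "int d dvd int n"
    using assms(2) by simp
  ultimately have "k mod int d = l mod int d"
    by (metis mod_mod_cancel)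
  then show "c = b \<and> k mod int d \<in> R"
    using l(2) \<open>c = b\<close> by simp
qed (auto simp: residue_set_def)

lemma residue_saturated_residue_set:
  "0 < n \<Longrightarrow> d dvd n \<Longrightarrow> residue_saturated n d (residue_set n d R b)"
  by (simp add: residue_saturated_def dih_elem_in_residue_set_iff)

lemma card_residue_set:
  assumes n: "n = p * d" "0 < n" and R: "R \<subseteq> {0..<int d}"
  shows "card (residue_set n d R b) = p * card R"
proof -
  let ?f = "\<lambda>(c, h). dih_elem n (c + int d * h) b"
  have d: "0 < int d" "int d dvd int n"
    using n by simp_all
  have range: "0 \<le> c + int d * h \<and> c + int d * h < int n" if "c \<in> R" "h \<in> {0..<int p}" for c h
  proof -
    have "c + int d * h < int d * (h + 1)" "h + 1 \<le> int p"
      using that R by (auto simp: algebra_simps)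
    then have "c + int d * h < int d * int p"
      using d(1) by (meson less_le_trans mult_left_mono less_imp_le)
    then show ?thesis
      using that R n(1) d(1) by (auto simp: mult.commute)
  qed
  have "residue_set n d R b \<subseteq> ?f ` (R \<times> {0..<int p})"
  proof
    fix x
    assume "x \<in> residue_set n d R b"
    then obtain k where x: "x = dih_elem n k b" and c: "k mod int d \<in> R"
      by (auto simp: residue_set_def)
    define h where "h = (k mod int n) div int d"
    have k: "k mod int n = k mod int d + int d * h"
      using mod_mult_div_eq[of "k mod int n" "int d"] mod_mod_cancel[OF d(2), of k]
      by (simp add: h_def)
    have "int d * h \<le> k mod int n"
      using k c R by auto
    also have "\<dots> < int d * int p"
      using n by (simp add: mult.commute)
    finally have "h < int p"
      using d(1) by simp
    moreover have "0 \<le> h"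
      using d(1) n(2) by (simp add: h_def pos_imp_zdiv_nonneg_iff)
    moreover have "x = ?f (k mod int d, h)"
      using n(2) k[symmetric] by (simp add: x dih_elem_eq_iff)
    ultimately show "x \<in> ?f ` (R \<times> {0..<int p})"
      using c by auto
  qed
  moreover have "?f ` (R \<times> {0..<int p}) \<subseteq> residue_set n d R b"
  proof -
    have "dih_elem n (c + int d * h) b \<in> residue_set n d R b" if "c \<in> R" for c h
    proof -
      have "(c + int d * h) mod int d \<in> R"
        using that R by (auto simp: subset_iff)
      then show ?thesis
        by (auto simp: residue_set_def)
    qed
    then show ?thesis
      by auto
  qed
  moreover have "inj_on ?f (R \<times> {0..<int p})"
  proof (rule inj_onI)
    fix x y
    assume x: "x \<in> R \<times> {0..<int p}" and y: "y \<in> R \<times> {0..<int p}" and "?f x = ?f y"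
    obtain c h c' h' where ch: "x = (c, h)" "y = (c', h')"
      by fastforce
    have "(c + int d * h) mod int n = (c' + int d * h') mod int n"
      using \<open>?f x = ?f y\<close> n(2) by (simp add: ch dih_elem_eq_iff)
    moreover have "(c + int d * h) mod int n = c + int d * h" "(c' + int d * h') mod int n = c' + int d * h'"
      using range[of c h] range[of c' h'] x y ch by simp_all
    ultimately have eq: "c + int d * h = c' + int d * h'"
      by simp
    have "c = (c + int d * h) mod int d" "c' = (c' + int d * h') mod int d"
      using x y R ch by auto
    then have "c = c'"
      using eq by simp
    then show "x = y"
      using eq d(1) ch by simp
  qed
  ultimately show ?thesis
    by (simp add: card_image card_cartesian_product subset_antisym)
qed

lemma inj_on_dih_elem_multiples:
  assumes "n = p * d" "0 < d"
  shows "inj_on (\<lambda>(j, a). dih_elem n (int d * j) a) ({0..<int p} \<times> UNIV)"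
proof (rule inj_onI)
  fix x y
  assume "x \<in> {0..<int p} \<times> UNIV" "y \<in> {0..<int p} \<times> UNIV"
    and eq: "(\<lambda>(j, a). dih_elem n (int d * j) a) x = (\<lambda>(j, a). dih_elem n (int d * j) a) y"
  then obtain j a j' a' where xy: "x = (j, a)" "y = (j', a')"
    and j: "0 \<le> j" "j < int p" "0 \<le> j'" "j' < int p"
    by auto
  have "int d * j < int n" "int d * j' < int n" "0 < n"
    using j assms by (simp_all add: mult.commute)
  moreover have "dih_elem n (int d * j) a = dih_elem n (int d * j') a'"
    using eq by (simp add: xy)
  ultimately have "int d * j = int d * j'" "a = a'"
    using j assms(2) by (simp_all add: dih_elem_eq_iff)
  then show "x = y"
    using assms(2) by (simp add: xy)
qed

lemma no_rotation_multiplier: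
  fixes v :: int
  assumes n: "int n = int p * int d" "int n dvd int d * int d" and p: "3 \<le> p" and d: "0 < d"
    and v: "v mod int d = 1 \<or> v mod int n = (- int d) mod int n"
    and vd: "(v * int d) mod int n = (- int d) mod int n"
  shows False
  using v
proof
  assume "v mod int d = 1"
  then obtain t where "v = 1 + int d * t"
    by (metis mod_div_mult_eq add.commute mult.commute)
  then have "(v * int d) mod int n = int d mod int n"
    using n(2) by (auto simp: algebra_simps mod_eq_dvd_iff elim!: dvdE)
  then have "int n dvd 2 * int d"
    using vd by (simp add: mod_eq_dvd_iff)
  then have "int p dvd 2"
    using n(1) d by (simp add: mult.commute)
  then show False
    using p by (auto dest: zdvd_imp_le)
next
  assume "v mod int n = (- int d) mod int n"
  then have "(v * int d) mod int n = (- int d * int d) mod int n"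
    by (metis mod_mult_left_eq)
  also have "\<dots> = 0"
    using n(2) by simp
  finally have "(- int d) mod int n = 0"
    using vd by simp
  then have "int n dvd int d"
    by (simp add: dvd_eq_mod_eq_0[symmetric])
  then show False
    using n(1) p d by (auto dest: zdvd_imp_le)
qed

lemma odd_square_dihedral_not_m_DCI:
  assumes p: "3 \<le> p" "p\<^sup>2 dvd n" and m: "p + 1 \<le> m" "m \<le> n - 1"
  shows "\<not> has_m_DCI (dihedral_group n) m"
proof -
  let ?D = "dihedral_group n"
  obtain e where e: "n = p * p * e"
    using p(2) by (auto simp: power2_eq_square)
  define d where "d = p * e"
  have n0: "0 < n"
    using m by linarith
  have nd: "n = p * d"
    using e by (simp add: d_def)
  have "0 < e"
    using n0 e by simp
  then have "p \<le> d"
    by (simp add: d_def)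
  then have d: "p \<le> d" "d < n" "d dvd n" "2 \<le> d"
    using p(1) nd by auto
  have dd: "int n dvd int d * int d"
    using e by (simp add: d_def)
  let ?F = "cayley_map_odd n d"
  define q where "q = (m - p - 1) div p"
  define r where "r = (m - p - 1) mod p"
  have m_qr: "m = p + q * p + r + 1" and "r < p"
    using m p(1) by (simp_all add: q_def r_def)
  have "(q + 1) * p < d * p"
    using m nd m_qr by (simp add: algebra_simps)
  then have q: "q + 1 < d"
    by (meson mult_less_cancel2)
  define A where "A = residue_set n d {1} False \<union> residue_set n d {1..int q} True"
  define J where "J = insert (1, False) ({0..<int r} \<times> {True})"
  define S where "S = A \<union> (\<lambda>(j, a). dih_elem n (int d * j) a) ` J"
  define T where "T = A \<union> (\<lambda>(j, a). dih_elem n (- (int d * j)) a) ` J"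
  have A: "residue_saturated n d A" "A \<subseteq> carrier ?D"
    using n0 d(3)
    by (simp_all add: A_def residue_saturated_Un residue_saturated_residue_set residue_set_subset_carrier)
  have A_iff: "dih_elem n k b \<in> A \<longleftrightarrow> (if b then k mod int d \<in> {1..int q} else k mod int d = 1)" for k b
    using n0 d(3) by (auto simp: A_def dih_elem_in_residue_set_iff)
  have S_rot: "dih_elem n 1 False \<in> S" "dih_elem n (int d) False \<in> S"
    using d(4) by (auto simp: S_def J_def A_iff)
  have T_rot: "l mod int d = 1 \<or> l mod int n = (- int d) mod int n" if l: "dih_elem n l False \<in> T" for l
  proof (cases "dih_elem n l False \<in> A")
    case True
    then show ?thesis
      by (simp add: A_iff)
  next
    case False
    then obtain j a where j: "(j, a) \<in> J" "dih_elem n l False = dih_elem n (- (int d * j)) a"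
      using l by (auto simp: T_def)
    then have "a = False"
      using n0 by (simp add: dih_elem_eq_iff)
    then have "j = 1"
      using j(1) by (simp add: J_def)
    then show ?thesis
      using j(2) n0 by (simp add: dih_elem_eq_iff)
  qed
  have ST: "S \<subseteq> carrier ?D" "T \<subseteq> carrier ?D"
    using A(2) n0 by (auto simp: S_def T_def)
  have "\<not> int n dvd int d"
    using d(2,4) by (auto dest: zdvd_imp_le)
  then have "int d mod int n \<noteq> 0" "(- int d) mod int n \<noteq> 0"
    by (simp_all add: dvd_eq_mod_eq_0[symmetric])
  then have "dih_elem n 0 False \<noteq> dih_elem n (int d * j) a"
    "dih_elem n 0 False \<noteq> dih_elem n (- (int d * j)) a" if "(j, a) \<in> J" for j a
    using that n0 by (auto simp: J_def dih_elem_eq_iff)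
  moreover have "dih_elem n 0 False \<notin> A"
    using d(4) by (simp add: A_iff)
  ultimately have ST_one: "\<one>\<^bsub>?D\<^esub> \<notin> S" "\<one>\<^bsub>?D\<^esub> \<notin> T"
    by (auto simp: S_def T_def one_dihedral_group)
  have "card S = m"
  proof -
    have fin: "finite (residue_set n d R b)" for R b
      using finite_subset[OF residue_set_subset_carrier[OF n0]] by (simp add: dihedral_group_def)
    have "{1..int q} \<subseteq> {0..<int d}"
      using q by auto
    then have "card (residue_set n d {1} False) = p" "card (residue_set n d {1..int q} True) = p * q"
      using card_residue_set[OF nd n0, of "{1}"] card_residue_set[OF nd n0, of "{1..int q}"] d(4)
      by auto
    moreover have "residue_set n d {1} False \<inter> residue_set n d {1..int q} True = {}"
      by (auto simp: residue_set_def dih_elem_def)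
    ultimately have "card A = p + q * p"
      by (simp add: A_def card_Un_disjoint fin)
    moreover have "card ((\<lambda>(j, a). dih_elem n (int d * j) a) ` J) = r + 1"
    proof -
      have "J \<subseteq> {0..<int p} \<times> UNIV"
        using \<open>r < p\<close> p(1) by (auto simp: J_def)
      then have "card ((\<lambda>(j, a). dih_elem n (int d * j) a) ` J) = card J"
        using inj_on_dih_elem_multiples[OF nd] d by (simp add: card_image inj_on_subset)
      then show ?thesis
        by (simp add: J_def card_cartesian_product)
    qed
    moreover have "dih_elem n (int d * j) a \<notin> A" for j a
      using d(4) by (simp add: A_iff)
    then have "A \<inter> (\<lambda>(j, a). dih_elem n (int d * j) a) ` J = {}"
      by auto
    moreover have "finite A"
      using A(2) by (rule finite_subset) (simp add: dihedral_group_def)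
    moreover have "finite J"
      by (simp add: J_def)
    ultimately show ?thesis
      unfolding S_def using m_qr by (simp add: card_Un_disjoint)
  qed
  have F: "bij_betw ?F (carrier ?D) (carrier ?D)"
    using n0 d(3) cayley_map_odd_involution
    by (intro bij_betw_byWitness[where f' = ?F]) (auto simp: cayley_map_odd_def)
  have "?F ` (S #>\<^bsub>?D\<^esub> x) = T #>\<^bsub>?D\<^esub> ?F x" if "x \<in> carrier ?D" for x
    using cayley_map_odd_r_coset_saturated[OF n0 d(3) A that]
      cayley_map_odd_r_coset_multiples[OF n0 d(3) that, of J]
    by (simp add: S_def T_def r_coset_Un image_Un)
  then have "cayley_digraph_iso ?D S T"
    using group.is_monoid[OF group_dihedral_group[OF n0]] F ST(1) by (intro cayley_digraph_isoI)
  moreover have "\<alpha> ` S \<noteq> T" if \<alpha>: "\<alpha> \<in> iso ?D ?D" for \<alpha>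
  proof
    assume "\<alpha> ` S = T"
    have "3 \<le> n"
      using p(1) d(1,2) by linarith
    then obtain v where v: "\<And>k. \<alpha> (dih_elem n (int k) False) = dih_elem n (v * int k) False"
      using dihedral_aut_rotation[OF _ \<alpha>] by blast
    have "\<alpha> (dih_elem n 1 False) \<in> T" "\<alpha> (dih_elem n (int d) False) \<in> T"
      using S_rot \<open>\<alpha> ` S = T\<close> by blast+
    then have "dih_elem n v False \<in> T" "dih_elem n (v * int d) False \<in> T"
      using v[of 1] v[of d] by simp_all
    then have "v mod int d = 1 \<or> v mod int n = (- int d) mod int n"
      "(v * int d) mod int n = (- int d) mod int n"
      using T_rot by fastforce+
    moreover have "int n = int p * int d"
      using nd by simp
    ultimately show False
      using no_rotation_multiplier[OF _ dd p(1)] d by simp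
  qed
  ultimately have "\<not> has_m_DCI ?D (card S)"
    by (rule not_has_m_DCI[OF ST(1) ST_one(1) ST(2) ST_one(2)])
  then show ?thesis
    using \<open>card S = m\<close> by simp
qed

lemma dihedral_m_DCI_not_prime_square_dvd:
  assumes n: "3 \<le> n" and DCI: "has_m_DCI (dihedral_group n) m"
    and p: "prime p" and m: "p + 1 \<le> m" "m \<le> n - 1"
  shows "\<not> p\<^sup>2 dvd 2 * n"
proof
  assume sq: "p\<^sup>2 dvd 2 * n"
  show False
  proof (cases "p = 2")
    case True
    then have "even n"
      using sq by (simp add: power2_eq_square)
    then have "4 \<le> n"
      using n by presburger
    then show False
      using even_dihedral_not_m_DCI[OF \<open>even n\<close>] DCI m True by simp
  next
    case False
    then have "odd p" "3 \<le> p"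
      using p prime_ge_2_nat[OF p] by (auto simp: prime_odd_nat)
    then have "coprime (p\<^sup>2) 2"
      by simp
    then have "p\<^sup>2 dvd n"
      using sq coprime_dvd_mult_right_iff by blast
    then show False
      using odd_square_dihedral_not_m_DCI[OF \<open>3 \<le> p\<close>] DCI m by blast
  qed
qed

lemma card_sylow_subgroup_eq_prime:
  assumes "sylow_subgroup G p P" "prime p" "p dvd order G" "\<not> p\<^sup>2 dvd order G"
  shows "card P = p"
proof -
  obtain k where k: "card P = p ^ k" "p ^ k dvd order G" "\<not> p ^ Suc k dvd order G"
    using assms(1) by (auto simp: sylow_subgroup_def)
  have "k \<noteq> 0"
  proof
    assume "k = 0"
    then show False
      using k(3) assms(3) by simp
  qed
  moreover have "k < 2"
  proof (rule ccontr)
    assume "\<not> k < 2"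
    then have "p\<^sup>2 dvd p ^ k"
      by (simp add: le_imp_power_dvd)
    then show False
      using k(2) assms(4) dvd_trans by blast
  qed
  ultimately show ?thesis
    using k(1) by (cases k) auto
qed

lemma prime_order_group_iso_integer_mod_group:
  assumes "group G" and card: "card (carrier G) = p" and p: "prime p"
  shows "G \<cong> integer_mod_group p"
proof -
  interpret G: group G by fact
  have p1: "1 < p"
    using p by (rule prime_gt_1_nat)
  then have fin: "finite (carrier G)"
    using card by (metis card.infinite not_less_zero)
  have "carrier G \<noteq> {\<one>\<^bsub>G\<^esub>}"
    using card p1 by auto
  then obtain g where g: "g \<in> carrier G" "g \<noteq> \<one>\<^bsub>G\<^esub>"
    using G.one_closed by blast
  have "G.ord g dvd p"
    using G.ord_dvd_group_order[OF g(1)] card by (simp add: order_def)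
  then have ord: "G.ord g = p"
    using p G.ord_eq_1[OF g(1)] g(2) by (auto simp: prime_nat_iff)
  define h where "h k = g [^]\<^bsub>G\<^esub> (k :: int)" for k
  have h_eq: "h k = h l \<longleftrightarrow> int p dvd l - k" for k l
    unfolding h_def using G.int_pow_eq[OF g(1)] ord by simp
  have carrier_Z: "carrier (integer_mod_group p) = {0..<int p}"
    using p1 by (simp add: carrier_integer_mod_group)
  have "h \<in> hom (integer_mod_group p) G"
  proof (rule homI)
    fix k l
    have "h ((k + l) mod int p) = h (k + l)"
      by (simp add: h_eq mod_eq_dvd_iff[symmetric])
    then show "h (k \<otimes>\<^bsub>integer_mod_group p\<^esub> l) = h k \<otimes>\<^bsub>G\<^esub> h l"
      using G.int_pow_mult[OF g(1)] by (simp add: h_def)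
  qed (simp add: h_def g(1))
  moreover have "inj_on h (carrier (integer_mod_group p))"
  proof (rule inj_onI)
    fix k l
    assume k: "k \<in> carrier (integer_mod_group p)" and l: "l \<in> carrier (integer_mod_group p)"
      and "h k = h l"
    then have "k mod int p = l mod int p"
      unfolding mod_eq_dvd_iff using h_eq dvd_diff_commute by blast
    moreover have "k mod int p = k" "l mod int p = l"
      using k l carrier_Z by (simp_all add: mod_pos_pos_trivial)
    ultimately show "k = l"
      by simp
  qed
  moreover have "h ` carrier (integer_mod_group p) = carrier G"
    using calculation fin card carrier_Z
    by (intro card_subset_eq) (auto simp: hom_def card_image)
  ultimately have "integer_mod_group p \<cong> G"
    by (auto simp: is_iso_def iso_def bij_betw_def)
  then show ?thesis
    by (rule group.iso_sym[OF group_integer_mod_group])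
qed

theorem lemma3p4:
  fixes n m p :: nat and P :: "(nat \<times> bool) set"
  assumes "n \<ge> 3" and "m > 0"
    and "has_m_DCI (dihedral_group n) m"
    and "prime p" and "p dvd 2 * n"
    and "p + 1 \<le> m" and "m \<le> n - 1"
    and "sylow_subgroup (dihedral_group n) p P"
  shows "(dihedral_group n)\<lparr>carrier := P\<rparr> \<cong> integer_mod_group p"
proof -
  have order: "order (dihedral_group n) = 2 * n"
    by (simp add: order_def dihedral_group_def card_cartesian_product)
  have "\<not> p\<^sup>2 dvd 2 * n"
    using dihedral_m_DCI_not_prime_square_dvd assms(1,3,4,6,7) by blast
  then have "card P = p"
    using card_sylow_subgroup_eq_prime[OF assms(8,4)] assms(5) order by simp
  have "subgroup P (dihedral_group n)"
    using assms(8) by (simp add: sylow_subgroup_def)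
  then have "group ((dihedral_group n)\<lparr>carrier := P\<rparr>)"
    using assms(1) group_dihedral_group by (intro subgroup.subgroup_is_group) simp_all
  then show ?thesis
    using \<open>card P = p\<close> assms(4) by (intro prime_order_group_iso_integer_mod_group) simp_all
qed

end
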